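(* Let $\mathfrak{M}$ be a non-quasianalytic weight matrix of R-moderate growth. Then the derived families satisfy $\mathfrak{S}\{\preceq\}\mathfrak{K}\{\preceq\}\underline{\mathfrak{L}}\{\preceq\}\mathfrak{L}$.
   Context: A weight sequence is $M=(M_k)_{k\ge0}$ with $M_k=\mu_0\cdots\mu_k$, $1=\mu_0\le\mu_1\le\cdots$, $\mu_k\to\infty$; non-quasianalytic if $\sum1/\mu_k<\infty$. A weight matrix $\mathfrak{M}=\{M^{(\alpha)}:\alpha>0\}$ is a family of weight sequences with $M^{(\alpha)}\le M^{(\beta)}$ for $\alpha\le\beta$; non-quasianalytic if all are; R-moderate growth: for each $M\in\mathfrak{M}$ there are $N\in\mathfrak{M}$, $C\ge1$ with $M_{j+k}\le C^{j+k}N_jN_k$. For positive sequences $M\preceq N$ means $\sup_{k\ge1}(M_k/N_k)^{1/k}<\infty$; for families, $\mathfrak{F}\{\preceq\}\mathfrak{G}$ means every $F\in\mathfrak{F}$ satisfies $F\preceq G$ for some $G\in\mathfrak{G}$. $\omega_M(t)=\sup_k\log(t^kM_0/M_k)$, $\widetilde\omega_M=\omega_M+\log(1+t^2)$, log-convex minorant $\underline P_k=P_0\sup_{t\ge0}t^ke^{-\omega_P(t)}$. $\kappa_\omega(t)=\int_1^\infty\omega(ts)s^{-2}ds$, $\varphi^*_\omega(x)=\sup_{y\ge0}(xy-\omega(e^y))$. Derived families: $K^{(\alpha)}_j=\exp(\varphi^*_{\kappa_\alpha}(j))$ with $\kappa_\alpha=\kappa_{\widetilde\omega_{M^{(\alpha)}}}$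 replaced by an equivalent normalized (vanishing on $[0,1]$) function, $\mathfrak{K}=\{K^{(\alpha)}\}$; $L^{(\alpha)}_0=1$, $L^{(\alpha)}_k=\min_{0\le j<k}(k/\sum_{\ell\ge k}(\mu^{(\alpha)}_\ell)^{-1})^{k-j}M^{(\alpha)}_j$, $\mathfrak{L}=\{L^{(\alpha)}\}$, $\underline{\mathfrak{L}}=\{\underline L^{(\alpha)}\}$; $S^{(\alpha)}_k=\sigma_0\cdots\sigma_k$ with $\sigma_0=1$, $\sigma_k=\tau_1k/\tau_k$, $\tau_k=k/\mu^{(\alpha)}_k+\sum_{\ell\ge k}1/\mu^{(\alpha)}_\ell$, $\mathfrak{S}=\{S^{(\alpha)}\}$. *)

theory Defs
  imports "HOL-Analysis.Analysis"
begin

definition weight_seq :: "(nat \<Rightarrow> real) \<Rightarrow> bool" where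
  "weight_seq M \<longleftrightarrow> (\<exists>\<mu>::nat \<Rightarrow> real. \<mu> 0 = 1 \<and> mono \<mu> \<and> filterlim \<mu> at_top sequentially
      \<and> (\<forall>k. M k = (\<Prod>j\<le>k. \<mu> j)))"

definition quot :: "(nat \<Rightarrow> real) \<Rightarrow> nat \<Rightarrow> real" where
  "quot M k = (if k = 0 then 1 else M k / M (k - 1))"

definition nonquasianalytic :: "(nat \<Rightarrow> real) \<Rightarrow> bool" where
  "nonquasianalytic M \<longleftrightarrow> weight_seq M \<and> summable (\<lambda>k. 1 / quot M k)"

definition weight_matrix :: "(real \<Rightarrow> nat \<Rightarrow> real) \<Rightarrow> bool" where
  "weight_matrix Mf \<longleftrightarrow> (\<forall>\<alpha>>0. weight_seq (Mf \<alpha>))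
     \<and> (\<forall>\<alpha> \<beta>. 0 < \<alpha> \<longrightarrow> \<alpha> \<le> \<beta> \<longrightarrow> (\<forall>k. Mf \<alpha> k \<le> Mf \<beta> k))"

definition nq_matrix :: "(real \<Rightarrow> nat \<Rightarrow> real) \<Rightarrow> bool" where
  "nq_matrix Mf \<longleftrightarrow> (\<forall>\<alpha>>0. nonquasianalytic (Mf \<alpha>))"

definition R_moderate :: "(real \<Rightarrow> nat \<Rightarrow> real) \<Rightarrow> bool" where
  "R_moderate Mf \<longleftrightarrow> (\<forall>\<alpha>>0. \<exists>\<beta>>0. \<exists>C\<ge>1. \<forall>j k.
      Mf \<alpha> (j + k) \<le> C ^ (j + k) * Mf \<beta> j * Mf \<beta> k)"

definition seq_preceq :: "(nat \<Rightarrow> real) \<Rightarrow> (nat \<Rightarrow> real) \<Rightarrow> bool" where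
  "seq_preceq M N \<longleftrightarrow> bdd_above ((\<lambda>k. root k (M k / N k)) ` {1..})"

definition fam_preceq :: "(real \<Rightarrow> nat \<Rightarrow> real) \<Rightarrow> (real \<Rightarrow> nat \<Rightarrow> real) \<Rightarrow> bool" where
  "fam_preceq F G \<longleftrightarrow> (\<forall>\<alpha>>0. \<exists>\<beta>>0. seq_preceq (F \<alpha>) (G \<beta>))"

definition omegaM :: "(nat \<Rightarrow> real) \<Rightarrow> real \<Rightarrow> real" where
  "omegaM M t = (if t \<le> 0 then 0 else (SUP k::nat. ln (t ^ k * M 0 / M k)))"

definition omega_tilde :: "(nat \<Rightarrow> real) \<Rightarrow> real \<Rightarrow> real" where
  "omega_tilde M t = omegaM M t + ln (1 + t\<^sup>2)"

definition lc_minorant :: "(nat \<Rightarrow> real) \<Rightarrow> nat \<Rightarrow> real" where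
  "lc_minorant P k = P 0 * (SUP t\<in>{0::real..}. t ^ k * exp (- omegaM P t))"

definition kappa :: "(real \<Rightarrow> real) \<Rightarrow> real \<Rightarrow> real" where
  "kappa \<omega> t = integral {1..} (\<lambda>s. \<omega> (t * s) / s\<^sup>2)"

text \<open>Normalized (vanishing on [0,1]) equivalent version of kappa: kappa is increasing,
  so subtracting the constant kappa 1 and cutting off at 1 gives an equivalent function.\<close>
definition kappa_norm :: "(real \<Rightarrow> real) \<Rightarrow> real \<Rightarrow> real" where
  "kappa_norm \<omega> t = (if t \<le> 1 then 0 else kappa \<omega> t - kappa \<omega> 1)"

definition phi_star :: "(real \<Rightarrow> real) \<Rightarrow> real \<Rightarrow> real" where
  "phi_star \<omega> x = (SUP y\<in>{0::real..}. x * y - \<omega> (exp y))"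

definition K_seq :: "(nat \<Rightarrow> real) \<Rightarrow> nat \<Rightarrow> real" where
  "K_seq M j = exp (phi_star (kappa_norm (omega_tilde M)) (real j))"

definition L_seq :: "(nat \<Rightarrow> real) \<Rightarrow> nat \<Rightarrow> real" where
  "L_seq M k = (if k = 0 then 1 else
     Min ((\<lambda>j. (real k / (\<Sum>l. 1 / quot M (l + k))) ^ (k - j) * M j) ` {..<k}))"

definition tau :: "(nat \<Rightarrow> real) \<Rightarrow> nat \<Rightarrow> real" where
  "tau M k = real k / quot M k + (\<Sum>l. 1 / quot M (l + k))"

definition sigma :: "(nat \<Rightarrow> real) \<Rightarrow> nat \<Rightarrow> real" where
  "sigma M k = (if k = 0 then 1 else tau M 1 * real k / tau M k)"

definition S_seq :: "(nat \<Rightarrow> real) \<Rightarrow> nat \<Rightarrow> real" where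
  "S_seq M k = (\<Prod>j\<le>k. sigma M j)"

end

theory Submission
  imports Defs
begin

text \<open>
  Let \<Gamma>(t) be the number of l \<ge> 1 with \<mu>_l \<le> t, and T(k) = \<Sum>_{l \<ge> k} 1/\<mu>_l. Then
  \<omega>_M(t) = \<Sum>_l max 0 (ln (t/\<mu>_l)), and integrating term by term gives the closed form
  \<kappa>_{\<omega>_M}(t) = \<omega>_M(t) + \<Gamma>(t) + t T(\<Gamma>(t) + 1).

  Comparing each candidate (k/T(k))^(k-j) M_j in the minimum defining L_k with this closed form,
  via a ln x \<le> max 0 (b (x - 1)), gives \<omega>_L \<le> \<kappa>_{\<omega>_M} \<le> \<kappa>_{\<omega>~_M}. Young duality turns
  this into K \<le> const \<cdot> L^lc, and L^lc \<le> L holds by construction.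

  For S take t = k/\<tau>_k: then \<sigma>_k = \<tau>_1 t and \<Gamma>(t) < k, so monotonicity of \<sigma> gives
  S_k \<le> D^(k+1) M_\<Gamma>(t) t^(k-\<Gamma>(t)) \<le> D (D e^3)^k t^k exp (-\<kappa>_{\<omega>_M}(t)). Moderate growth
  M^\<alpha>_(k+2) \<le> C^(k+2) M^\<beta>_k M^\<beta>_2 absorbs the extra term ln (1 + u^2) of \<omega>~:
  \<omega>~_{M^\<beta>}(u) \<le> \<omega>_{M^\<alpha>}(C u) + const, hence the same holds for the \<kappa>'s, and Young
  duality again gives S^\<alpha> \<preceq> K^\<beta>.
\<close>

lemma quot_eq_of_prod:
  assumes "\<And>k. M k = (\<Prod>j\<le>k. \<mu> j)" and "\<And>k. 0 < \<mu> k" and "\<mu> 0 = 1"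
  shows "quot M = \<mu>"
proof
  fix k
  have pos: "0 < M k" for k unfolding assms(1) using assms(2) by (intro prod_pos) auto
  have "M (Suc k) = M k * \<mu> (Suc k)" for k unfolding assms(1) by simp
  then show "quot M k = \<mu> k"
    using assms(3) pos by (cases k) (simp_all add: quot_def less_imp_neq[symmetric])
qed

lemma omegaM_le:
  assumes "0 < u" and "\<And>k. ln (u ^ k * P 0 / P k) \<le> B"
  shows "omegaM P u \<le> B"
  unfolding omegaM_def using assms by (auto intro!: cSUP_least)

lemma le_omegaM:
  assumes "0 < u" and "\<And>k. ln (u ^ k * P 0 / P k) \<le> B"
  shows "ln (u ^ k * P 0 / P k) \<le> omegaM P u"
  unfolding omegaM_def using assms by (auto intro!: cSUP_upper bdd_aboveI2)

lemma has_integral_ln_over_square: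
  fixes c a y :: real
  assumes c: "0 < c" and a: "1 \<le> c * a" "a \<le> y"
  shows "((\<lambda>r. ln (c * r) / r\<^sup>2) has_integral
           ((ln (c * a) + 1) / a - (ln (c * y) + 1) / y)) {a..y}"
proof -
  have a0: "0 < a" using zero_less_mult_pos[of c a] a(1) c by simp
  have "((\<lambda>r. - (ln (c * r) + 1) / r) has_real_derivative ln (c * x) / x\<^sup>2) (at x)"
    if "0 < x" for x
  proof -
    have "((\<lambda>r. - (ln (c * r) + 1) / r) has_real_derivative
          ((- (c / (c * x))) * x - (- (ln (c * x) + 1)) * 1) / (x * x)) (at x)"
      using c that by (auto intro!: derivative_eq_intros)
    then show ?thesis using c that by (simp add: field_simps power2_eq_square)
  qed
  then have "((\<lambda>r. ln (c * r) / r\<^sup>2) has_integral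
           (- (ln (c * y) + 1) / y - - (ln (c * a) + 1) / a)) {a..y}"
    using a0 a(2)
    by (intro fundamental_theorem_of_calculus)
       (auto simp: has_real_derivative_iff_has_vector_derivative[symmetric]
             intro: has_field_derivative_at_within)
  then show ?thesis by (rule has_integral_eq_rhs) (use a0 a(2) in \<open>simp add: field_simps\<close>)
qed

lemma ln_plus_one_over_tendsto_0:
  fixes c :: real
  assumes "0 < c" shows "((\<lambda>y. (ln (c * y) + 1) / y) \<longlongrightarrow> 0) at_top"
proof -
  have "((\<lambda>y. (ln c + 1) * inverse y + ln y / y) \<longlongrightarrow> (ln c + 1) * 0 + 0) at_top"
    by (intro tendsto_intros tendsto_inverse_0_at_top filterlim_ident ln_x_over_x_tendsto_0)
  moreover have "\<forall>\<^sub>F y in at_top. (ln c + 1) * inverse y + ln y / y = (ln (c * y) + 1) / y"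
    using eventually_gt_at_top[of 0]
    by eventually_elim (simp add: assms ln_mult_pos field_simps)
  ultimately show ?thesis by (simp add: tendsto_cong)
qed

definition pos_ln_integral :: "real \<Rightarrow> real" where
  "pos_ln_integral c = (if 1 \<le> c then ln c + 1 else c)"

lemma has_integral_pos_ln_over_square:
  fixes c :: real
  assumes c: "0 < c"
  shows "((\<lambda>r. max 0 (ln (c * r)) / r\<^sup>2) has_integral pos_ln_integral c) {1..}"
proof -
  define h where "h = (\<lambda>r. max 0 (ln (c * r)) / r\<^sup>2)"
  define a where "a = max 1 (1 / c)"
  define F where "F y = (ln (c * y) + 1) / y" for y
  have a: "1 \<le> a" "1 \<le> c * a" using c by (auto simp: a_def max_def field_simps)
  have head: "(h has_integral 0) {1..a}"
  proof (cases "1 \<le> c")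
    case True
    then show ?thesis by (simp add: a_def has_integral_refl(2))
  next
    case False
    have "h r = 0" if "r \<in> {1..a}" for r
    proof -
      have "c * r \<le> 1" using that c False by (simp add: a_def field_simps)
      then show ?thesis using that c by (simp add: h_def)
    qed
    then show ?thesis by (rule has_integral_is_0)
  qed
  have body: "(h has_integral (F a - F y)) {1..y}" if "a \<le> y" for y
  proof -
    have "1 \<le> c * r" if "r \<in> {a..y}" for r
    proof -
      have "c * a \<le> c * r" using that c by (intro mult_left_mono) auto
      then show ?thesis using a(2) by linarith
    qed
    then have "(h has_integral (F a - F y)) {a..y}"
      using has_integral_ln_over_square[OF c a(2) that]
      by (subst has_integral_cong[where g = "\<lambda>r. ln (c * r) / r\<^sup>2"]) (auto simp: h_def F_def)
    then show ?thesis using has_integral_combine[OF a(1) that head] by simp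
  qed
  have "\<forall>\<^sub>F y in at_top. integral {1..y} h = F a - F y"
    using eventually_ge_at_top[of a] by eventually_elim (use body integral_unique in blast)
  moreover have "((\<lambda>y. F a - F y) \<longlongrightarrow> F a - 0) at_top"
    unfolding F_def by (intro tendsto_intros ln_plus_one_over_tendsto_0 c)
  ultimately have "((\<lambda>y. integral {1..y} h) \<longlongrightarrow> F a) at_top"
    by (simp add: tendsto_cong)
  moreover have "h integrable_on {1..y}" for y
    unfolding h_def using c by (intro integrable_continuous_interval continuous_intros) auto
  ultimately have "(h has_integral F a) {1..}"
    by (intro has_integral_to_inf) (auto simp: h_def)
  moreover have "F a = pos_ln_integral c"
    using c by (auto simp: F_def a_def pos_ln_integral_def max_def field_simps)
  ultimately show ?thesis by (simp add: h_def)
qed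

lemma ln_one_plus_square_le:
  fixes u :: real
  assumes "0 < u"
  shows "ln (1 + u\<^sup>2) \<le> ln 2 + 2 * max 0 (ln u)"
proof (cases "u \<le> 1")
  case True
  then have "u\<^sup>2 \<le> 1" using assms by (simp add: power_le_one)
  then have "ln (1 + u\<^sup>2) \<le> ln 2" by (subst ln_le_cancel_iff) (auto simp: add_pos_nonneg)
  then show ?thesis by simp
next
  case False
  then have "1 + u\<^sup>2 \<le> 2 * u\<^sup>2" by (simp add: power2_eq_square) (smt (verit) mult_le_cancel_right1)
  then have "ln (1 + u\<^sup>2) \<le> ln (2 * u\<^sup>2)"
    using assms by (subst ln_le_cancel_iff) (auto simp: add_pos_nonneg)
  also have "\<dots> = ln 2 + 2 * ln u" using assms by (simp add: ln_mult_pos ln_realpow)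
  finally show ?thesis by simp
qed

lemma mult_ln_le_max_linear:
  fixes x a b :: real
  assumes "0 < x" "0 \<le> a" "a \<le> b"
  shows "a * ln x \<le> max 0 (b * (x - 1))"
proof (cases "ln x \<le> 0")
  case True
  then show ?thesis using assms by (simp add: mult_nonneg_nonpos)
next
  case False
  then have "a * ln x \<le> b * ln x" using assms by (intro mult_right_mono) auto
  also have "\<dots> \<le> b * (x - 1)" using assms ln_le_minus_one[of x] by (intro mult_left_mono) auto
  finally show ?thesis by simp
qed

lemma seq_preceqI:
  assumes "\<And>k. 1 \<le> k \<Longrightarrow> 0 < N k \<and> X k \<le> A ^ k * E * N k" and "0 \<le> A" and "1 \<le> E"
  shows "seq_preceq X N"
  unfolding seq_preceq_def
proof (rule bdd_aboveI2)
  fix k :: nat assume "k \<in> {1..}"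
  then have k: "1 \<le> k" by simp
  then have "root k (X k / N k) \<le> root k (A ^ k * E)"
    using assms(1)[OF k] by (simp add: divide_le_eq)
  also have "\<dots> = A * root k E" using k assms(2) by (simp add: real_root_mult real_root_power_cancel)
  also have "\<dots> \<le> A * E"
    using real_root_decreasing[of 1 k E] k assms(2,3) by (intro mult_left_mono) auto
  finally show "root k (X k / N k) \<le> A * E" .
qed

section \<open>The associated function of a nonquasianalytic weight sequence\<close>

locale nonquasianalytic_weight =
  fixes M :: "nat \<Rightarrow> real"
  assumes nonquasianalytic: "nonquasianalytic M"
begin

abbreviation \<mu> where "\<mu> \<equiv> quot M"

lemma quot_props:
  "\<mu> 0 = 1" "mono \<mu>" "filterlim \<mu> at_top sequentially" "M k = (\<Prod>j\<le>k. \<mu> j)"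
proof -
  obtain \<nu> where \<nu>: "\<nu> 0 = 1" "mono \<nu>" "filterlim \<nu> at_top sequentially"
    and M: "\<And>k. M k = (\<Prod>j\<le>k. \<nu> j)"
    using nonquasianalytic unfolding nonquasianalytic_def weight_seq_def by blast
  have "0 < \<nu> k" for k using monoD[OF \<nu>(2), of 0 k] \<nu>(1) by simp
  then have "\<mu> = \<nu>" by (intro quot_eq_of_prod[OF M _ \<nu>(1)])
  then show "\<mu> 0 = 1" "mono \<mu>" "filterlim \<mu> at_top sequentially" "M k = (\<Prod>j\<le>k. \<mu> j)"
    using \<nu> M by simp_all
qed

lemmas quot_0 [simp] = quot_props(1)
  and quot_tendsto = quot_props(3)
  and M_eq_prod = quot_props(4)

lemma quot_mono: "i \<le> j \<Longrightarrow> \<mu> i \<le> \<mu> j"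
  using quot_props(2) unfolding mono_def by blast

lemma quot_ge_1: "1 \<le> \<mu> k"
  using quot_mono[of 0 k] by simp

lemma quot_pos: "0 < \<mu> k"
  using quot_ge_1[of k] by linarith

lemma M_0 [simp]: "M 0 = 1"
  by (simp add: M_eq_prod[of 0])

lemma M_Suc: "M (Suc k) = M k * \<mu> (Suc k)"
  by (simp only: M_eq_prod[of "Suc k"] M_eq_prod[of k] prod.atMost_Suc)

lemma M_ge_1: "1 \<le> M k"
  unfolding M_eq_prod[of k] using quot_ge_1 by (intro prod_ge_1) auto

lemma M_pos: "0 < M k"
  using M_ge_1[of k] by linarith

lemma summable_inverse_quot: "summable (\<lambda>l. 1 / \<mu> (l + k))"
proof -
  have "summable (\<lambda>l. 1 / \<mu> l)"
    using nonquasianalytic unfolding nonquasianalytic_def by simp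
  then show ?thesis by (rule summable_ignore_initial_segment)
qed

text \<open>\<open>\<Gamma> u\<close> counts the \<open>l \<ge> 1\<close> with \<open>\<mu> l \<le> u\<close>; the supremum defining
  \<open>omegaM M u\<close> is attained at \<open>k = \<Gamma> u\<close>.\<close>
definition \<Gamma> :: "real \<Rightarrow> nat" where "\<Gamma> u = (LEAST m. u < \<mu> (Suc m))"

lemma less_quot_Suc_Gamma: "u < \<mu> (Suc (\<Gamma> u))"
proof -
  have "\<forall>\<^sub>F n in sequentially. u < \<mu> n"
    using quot_tendsto filterlim_at_top_dense by blast
  then obtain N where "\<forall>n\<ge>N. u < \<mu> n"
    unfolding eventually_sequentially by blast
  then have "u < \<mu> (Suc N)" by simp
  then show ?thesis unfolding \<Gamma>_def by (rule LeastI)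
qed

lemma quot_le_of_le_Gamma:
  assumes "1 \<le> l" and "l \<le> \<Gamma> u" shows "\<mu> l \<le> u"
proof -
  obtain j where j: "l = Suc j" "j < \<Gamma> u" using assms by (cases l) auto
  from j(2) have "\<not> u < \<mu> (Suc j)" unfolding \<Gamma>_def by (rule not_less_Least)
  then show ?thesis using j by simp
qed

lemma less_quot_of_Gamma_less: "\<Gamma> u < l \<Longrightarrow> u < \<mu> l"
  using less_quot_Suc_Gamma[of u] quot_mono[of "Suc (\<Gamma> u)" l] by simp

definition ln_ratio :: "real \<Rightarrow> nat \<Rightarrow> real" where
  "ln_ratio u k = (\<Sum>l<k. ln (u / \<mu> (Suc l)))"

lemma ln_power_div_M: "0 < u \<Longrightarrow> ln (u ^ k / M k) = ln_ratio u k"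
proof (induction k)
  case (Suc k)
  have "u ^ Suc k / M (Suc k) = (u ^ k / M k) * (u / \<mu> (Suc k))"
    by (simp add: M_Suc)
  also have "ln \<dots> = ln (u ^ k / M k) + ln (u / \<mu> (Suc k))"
    using Suc.prems M_pos[of k] quot_pos[of "Suc k"] by (intro ln_mult_pos) simp_all
  finally show ?case using Suc by (simp add: ln_ratio_def)
qed (simp add: ln_ratio_def)

lemma ln_ratio_le_Gamma:
  assumes "0 < u" shows "ln_ratio u k \<le> ln_ratio u (\<Gamma> u)"
proof (cases "k \<le> \<Gamma> u")
  case True
  then show ?thesis
  proof (induction rule: inc_induct)
    case (step n)
    have "\<mu> (Suc n) \<le> u" using quot_le_of_le_Gamma[of "Suc n" u] step by simp
    then have "0 \<le> ln (u / \<mu> (Suc n))" using quot_pos[of "Suc n"] assms by simp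
    then show ?case using step by (simp add: ln_ratio_def)
  qed simp
next
  case False
  then have "\<Gamma> u \<le> k" by simp
  then show ?thesis
  proof (induction rule: dec_induct)
    case (step n)
    have "u < \<mu> (Suc n)" using less_quot_of_Gamma_less[of u "Suc n"] step by simp
    then have "ln (u / \<mu> (Suc n)) \<le> 0" using quot_pos[of "Suc n"] assms by simp
    then show ?case using step by (simp add: ln_ratio_def)
  qed simp
qed

lemma omegaM_eq:
  assumes u: "0 < u" shows "omegaM M u = ln_ratio u (\<Gamma> u)"
proof -
  have "omegaM M u = Sup (range (ln_ratio u))"
    using u by (simp add: omegaM_def ln_power_div_M)
  also have "\<dots> = ln_ratio u (\<Gamma> u)"
    by (rule cSup_eq_maximum) (auto intro: ln_ratio_le_Gamma[OF u])
  finally show ?thesis .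
qed

lemma ln_ratio_le_omegaM: "0 < u \<Longrightarrow> ln_ratio u k \<le> omegaM M u"
  using omegaM_eq ln_ratio_le_Gamma by simp

lemma omegaM_nonneg: "0 \<le> omegaM M u"
proof (cases "0 < u")
  case True
  then show ?thesis using ln_ratio_le_omegaM[of u 0] by (simp add: ln_ratio_def)
qed (simp add: omegaM_def)

lemma omegaM_eq_0: "u \<le> 1 \<Longrightarrow> omegaM M u = 0"
proof (cases "0 < u")
  case True
  assume "u \<le> 1"
  then have "ln (u / \<mu> (Suc l)) \<le> 0" for l
    using True quot_ge_1[of "Suc l"] quot_pos[of "Suc l"] by simp
  then have "ln_ratio u (\<Gamma> u) \<le> 0" unfolding ln_ratio_def by (intro sum_nonpos)
  then show ?thesis using omegaM_eq[OF True] omegaM_nonneg[of u] by linarith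
qed (simp add: omegaM_def)

lemma sum_pos_ln_eq_omegaM:
  assumes u: "0 < u" and N: "\<Gamma> u \<le> N"
  shows "(\<Sum>l<N. max 0 (ln (u / \<mu> (Suc l)))) = omegaM M u"
  using N
proof (induction rule: dec_induct)
  case base
  have "0 \<le> ln (u / \<mu> (Suc l))" if "l < \<Gamma> u" for l
    using quot_le_of_le_Gamma[of "Suc l" u] that quot_pos[of "Suc l"] by simp
  then show ?case unfolding omegaM_eq[OF u] ln_ratio_def by (intro sum.cong) auto
next
  case (step n)
  have "u < \<mu> (Suc n)" by (rule less_quot_of_Gamma_less) (use step in simp)
  then have "u / \<mu> (Suc n) \<le> 1" using quot_pos[of "Suc n"] by simp
  then have "max 0 (ln (u / \<mu> (Suc n))) = 0" using u quot_pos[of "Suc n"] by simp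
  then show ?case using step.IH by simp
qed

definition tail :: "nat \<Rightarrow> real" where "tail k = (\<Sum>l. 1 / \<mu> (l + k))"

lemma tail_split: "tail k = (\<Sum>l<d. 1 / \<mu> (l + k)) + tail (k + d)"
proof -
  have "tail k = (\<Sum>l. 1 / \<mu> (l + d + k)) + (\<Sum>l<d. 1 / \<mu> (l + k))"
    unfolding tail_def by (rule suminf_split_initial_segment[OF summable_inverse_quot])
  then show ?thesis unfolding tail_def by (simp add: ac_simps)
qed

lemma tail_pos: "0 < tail k"
  unfolding tail_def by (rule suminf_pos[OF summable_inverse_quot]) (simp add: quot_pos)

lemma tail_antimono: "k \<le> k' \<Longrightarrow> tail k' \<le> tail k"
  using tail_split[of k "k' - k"] quot_pos by (simp add: sum_nonneg less_imp_le)

lemma pos_ln_integral_sums: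
  assumes t: "0 < t"
  shows "(\<lambda>l. pos_ln_integral (t / \<mu> (Suc l))) sums (omegaM M t + \<Gamma> t + t * tail (Suc (\<Gamma> t)))"
proof -
  define m where "m = \<Gamma> t"
  define f where "f = (\<lambda>l. pos_ln_integral (t / \<mu> (Suc l)))"
  have "f (l + m) = t * (1 / \<mu> (l + Suc m))" for l
    using less_quot_of_Gamma_less[of t "Suc (l + m)"] quot_pos[of "Suc (l + m)"]
    by (simp add: f_def m_def pos_ln_integral_def)
  moreover have "(\<lambda>l. t * (1 / \<mu> (l + Suc m))) sums (t * tail (Suc m))"
    unfolding tail_def by (intro sums_mult summable_sums summable_inverse_quot)
  ultimately have "(\<lambda>l. f (l + m)) sums (t * tail (Suc m))"
    by presburger
  then have "f sums (t * tail (Suc m) + (\<Sum>l<m. f l))"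
    by (simp add: sums_iff_shift)
  moreover have "f l = ln (t / \<mu> (Suc l)) + 1" if "l < m" for l
    using quot_le_of_le_Gamma[of "Suc l" t] quot_pos[of "Suc l"] that
    by (simp add: f_def m_def pos_ln_integral_def)
  then have "(\<Sum>l<m. f l) = omegaM M t + m"
    by (simp add: omegaM_eq[OF t] ln_ratio_def m_def sum.distrib)
  ultimately have "f sums (omegaM M t + m + t * tail (Suc m))"
    by (simp add: add_ac)
  then show ?thesis unfolding f_def m_def .
qed

lemma has_integral_omegaM_over_square:
  assumes t: "0 < t"
  shows "((\<lambda>s. omegaM M (t * s) / s\<^sup>2) has_integral (omegaM M t + \<Gamma> t + t * tail (Suc (\<Gamma> t)))) {1..}"
proof (rule has_integral_monotone_convergence_increasing)
  define f where "f N s = (\<Sum>l<N. max 0 (ln (t / \<mu> (Suc l) * s)) / s\<^sup>2)" for N s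
  show "(f N has_integral (\<Sum>l<N. pos_ln_integral (t / \<mu> (Suc l)))) {1..}" for N
    unfolding f_def
    using t quot_pos by (intro has_integral_sum has_integral_pos_ln_over_square) auto
  show "f N s \<le> f (Suc N) s" for N s
    by (simp add: f_def)
  show "(\<lambda>N. f N s) \<longlonglongrightarrow> omegaM M (t * s) / s\<^sup>2" if "s \<in> {1..}" for s
  proof (rule tendsto_eventually)
    have "f N s = omegaM M (t * s) / s\<^sup>2" if "\<Gamma> (t * s) \<le> N" for N
      using sum_pos_ln_eq_omegaM[OF _ that] \<open>s \<in> {1..}\<close> t
      by (simp add: f_def sum_divide_distrib[symmetric] ac_simps)
    then show "\<forall>\<^sub>F N in sequentially. f N s = omegaM M (t * s) / s\<^sup>2"
      using eventually_ge_at_top by (rule eventually_mono[rotated])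
  qed
  show "(\<lambda>N. \<Sum>l<N. pos_ln_integral (t / \<mu> (Suc l))) \<longlonglongrightarrow> omegaM M t + \<Gamma> t + t * tail (Suc (\<Gamma> t))"
    using pos_ln_integral_sums[OF t] by (simp add: sums_def)
qed

lemma kappa_omegaM_eq:
  "0 < t \<Longrightarrow> kappa (omegaM M) t = omegaM M t + \<Gamma> t + t * tail (Suc (\<Gamma> t))"
  unfolding kappa_def by (rule integral_unique[OF has_integral_omegaM_over_square])

lemma omegaM_le_kappa: "0 < t \<Longrightarrow> omegaM M t \<le> kappa (omegaM M) t"
  using kappa_omegaM_eq tail_pos[of "Suc (\<Gamma> t)"] by (simp add: add_nonneg_nonneg)

lemma kappa_omegaM_nonneg: "0 < t \<Longrightarrow> 0 \<le> kappa (omegaM M) t"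
  using omegaM_le_kappa omegaM_nonneg order_trans by blast

lemma ln_one_plus_square_le_omegaM:
  assumes u: "0 < u" shows "ln (1 + u\<^sup>2) \<le> omegaM M u + ln (2 * M 2)"
proof -
  have "2 * ln u \<le> omegaM M u + ln (M 2)"
    using ln_ratio_le_omegaM[OF u, of 2] ln_power_div_M[OF u, of 2] M_pos[of 2] u
    by (simp add: ln_div ln_realpow)
  then have "ln 2 + 2 * max 0 (ln u) \<le> omegaM M u + ln (2 * M 2)"
    using omegaM_nonneg[of u] M_ge_1[of 2] by (simp add: ln_mult_pos max_def)
  then show ?thesis using ln_one_plus_square_le[OF u] by linarith
qed

lemma integrable_omega_tilde_over_square:
  assumes t: "0 < t"
  shows "(\<lambda>s. omega_tilde M (t * s) / s\<^sup>2) integrable_on {1..}"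
proof -
  have "(\<lambda>s. ln (1 + (t * s)\<^sup>2) / s\<^sup>2) integrable_on {1..}"
  proof (rule measurable_bounded_by_integrable_imp_integrable)
    have "continuous_on {1..} (\<lambda>s. ln (1 + (t * s)\<^sup>2) / s\<^sup>2)"
      by (intro continuous_intros) (auto simp: add_pos_nonneg add_nonneg_eq_0_iff)
    then show "(\<lambda>s. ln (1 + (t * s)\<^sup>2) / s\<^sup>2) \<in> borel_measurable (lebesgue_on {1..})"
      by (rule continuous_imp_measurable_on_sets_lebesgue) simp
    have "(\<lambda>s. 1 / s\<^sup>2) integrable_on {1::real..}"
      using has_integral_inverse_power_to_inf[of 2 1] by auto
    then show "(\<lambda>s. omegaM M (t * s) / s\<^sup>2 + ln (2 * M 2) * (1 / s\<^sup>2)) integrable_on {1..}"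
      by (intro integrable_add has_integral_integrable[OF has_integral_omegaM_over_square[OF t]]
          integrable_on_mult_right)
    show "norm (ln (1 + (t * s)\<^sup>2) / s\<^sup>2) \<le> omegaM M (t * s) / s\<^sup>2 + ln (2 * M 2) * (1 / s\<^sup>2)"
      if "s \<in> {1..}" for s
      using ln_one_plus_square_le_omegaM[of "t * s"] that t
      by (simp add: add_divide_distrib[symmetric] divide_right_mono)
  qed simp
  then show ?thesis
    unfolding omega_tilde_def add_divide_distrib
    by (intro integrable_add has_integral_integrable[OF has_integral_omegaM_over_square[OF t]])
qed

lemma kappa_omegaM_le_kappa_omega_tilde:
  assumes t: "0 < t" shows "kappa (omegaM M) t \<le> kappa (omega_tilde M) t"
  unfolding kappa_def
  using has_integral_integrable[OF has_integral_omegaM_over_square[OF t]]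
    integrable_omega_tilde_over_square[OF t]
  by (rule integral_le) (simp add: omega_tilde_def divide_right_mono)

lemma kappa_omega_tilde_nonneg: "0 < t \<Longrightarrow> 0 \<le> kappa (omega_tilde M) t"
  using kappa_omegaM_nonneg kappa_omegaM_le_kappa_omega_tilde order_trans by blast

section \<open>The sequences L and K\<close>

lemma ln_ratio_add_le:
  assumes t: "0 < t" and "j \<le> n"
  shows "ln_ratio t j + real (n - j) * ln (t / \<mu> n) \<le> ln_ratio t n"
proof -
  have "ln_ratio t j + real (k - j) * ln (t / \<mu> n) \<le> ln_ratio t k" if "j \<le> k" "k \<le> n" for k
    using that
  proof (induction k rule: dec_induct)
    case (step k)
    have "ln (t / \<mu> n) \<le> ln (t / \<mu> (Suc k))"
      using quot_mono[of "Suc k" n] step t quot_pos[of "Suc k"] by (simp add: divide_left_mono)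
    then show ?case using step by (simp add: ln_ratio_def of_nat_diff algebra_simps)
  qed simp
  then show ?thesis using assms(2) by simp
qed

lemma quot_mult_tail_le: "n \<le> k \<Longrightarrow> \<mu> n * tail n \<le> real k - real n + \<mu> n * tail k"
proof -
  assume "n \<le> k"
  have "\<mu> n * (\<Sum>l<k - n. 1 / \<mu> (l + n)) \<le> (\<Sum>l<k - n. 1)"
    unfolding sum_distrib_left using quot_mono quot_pos by (intro sum_mono) simp
  then show ?thesis
    using tail_split[of n "k - n"] \<open>n \<le> k\<close> by (simp add: distrib_left)
qed

abbreviation L where "L \<equiv> L_seq M"

lemma L_seq_0 [simp]: "L 0 = 1"
  by (simp add: L_seq_def)

lemma L_seq_attained: "1 \<le> n \<Longrightarrow> \<exists>j<n. L n = (n / tail n) ^ (n - j) * M j"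
proof -
  assume n: "1 \<le> n"
  let ?f = "\<lambda>j. (n / tail n) ^ (n - j) * M j"
  have "L n = Min (?f ` {..<n})" using n by (simp add: L_seq_def tail_def)
  moreover have "Min (?f ` {..<n}) \<in> ?f ` {..<n}"
    using n by (intro Min_in) (auto simp: lessThan_empty_iff)
  ultimately show ?thesis by auto
qed

lemma L_seq_pos: "0 < L n"
proof (cases "n = 0")
  case False
  then obtain j where "L n = (n / tail n) ^ (n - j) * M j" using L_seq_attained[of n] by auto
  then show ?thesis using False tail_pos[of n] M_pos[of j] by simp
qed simp

lemma mult_ln_tail_le:
  assumes "j < n" and "0 < x"
  shows "real (n - j) * ln (x * tail n / n) \<le> max 0 (x * tail n - n)"
proof -
  have "real (n - j) * ln (x * tail n / n) \<le> max 0 (n * (x * tail n / n - 1))"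
    using assms tail_pos[of n] by (intro mult_ln_le_max_linear) auto
  also have "n * (x * tail n / n - 1) = x * tail n - n" using assms by (simp add: field_simps)
  finally show ?thesis .
qed

lemma ln_ratio_add_le_kappa:
  assumes t: "0 < t" and j: "j < n"
  shows "ln_ratio t j + real (n - j) * ln (t * tail n / n) \<le> kappa (omegaM M) t"
proof -
  define m where "m = \<Gamma> t"
  have kappa: "kappa (omegaM M) t = ln_ratio t m + m + t * tail (Suc m)"
    by (simp add: kappa_omegaM_eq[OF t] omegaM_eq[OF t] m_def)
  have tail_nonneg: "0 \<le> t * tail (Suc m)" using t tail_pos[of "Suc m"] by simp
  show ?thesis
  proof (cases "m < n")
    case True
    have "t * tail n \<le> t * tail (Suc m)"
      using tail_antimono[of "Suc m" n] True t by (intro mult_left_mono) auto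
    then have "real (n - j) * ln (t * tail n / n) \<le> t * tail (Suc m)"
      using mult_ln_tail_le[OF j t] tail_nonneg by linarith
    then show ?thesis using ln_ratio_le_Gamma[OF t, of j] unfolding kappa m_def by simp
  next
    case False
    have "\<mu> n \<le> t" using quot_le_of_le_Gamma[of n t] j False by (simp add: m_def)
    have "\<mu> n * tail n \<le> real (Suc m) - real n + \<mu> n * tail (Suc m)"
      using False by (intro quot_mult_tail_le) simp
    moreover have "\<mu> n * tail (Suc m) \<le> t * tail (Suc m)"
      using \<open>\<mu> n \<le> t\<close> tail_pos[of "Suc m"] by (intro mult_right_mono) auto
    ultimately have "real (n - j) * ln (\<mu> n * tail n / n) \<le> m + t * tail (Suc m)"
      using mult_ln_tail_le[OF j quot_pos[of n]] tail_nonneg j by linarith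
    moreover have "ln (t * tail n / n) = ln (t / \<mu> n) + ln (\<mu> n * tail n / n)"
      using t tail_pos[of n] quot_pos[of n] j by (simp add: ln_mult_pos[symmetric])
    moreover have "ln_ratio t j + real (n - j) * ln (t / \<mu> n) \<le> ln_ratio t m"
      using ln_ratio_add_le[OF t, of j n] ln_ratio_le_Gamma[OF t, of n] j by (simp add: m_def)
    ultimately show ?thesis unfolding kappa by (simp add: distrib_left)
  qed
qed

lemma ln_power_div_L_le_kappa:
  assumes t: "0 < t" shows "ln (t ^ n / L n) \<le> kappa (omegaM M) t"
proof (cases "n = 0")
  case True
  then show ?thesis using kappa_omegaM_nonneg[OF t] by simp
next
  case False
  then obtain j where j: "j < n" and Ln: "L n = (n / tail n) ^ (n - j) * M j"
    using L_seq_attained[of n] by auto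
  have pos: "0 < t ^ j / M j" "0 < t * tail n / n"
    using t tail_pos[of n] M_pos[of j] j by simp_all
  have "t ^ n / L n = (t ^ j / M j) * (t * tail n / n) ^ (n - j)"
    using j tail_pos[of n] M_pos[of j]
    by (simp add: Ln field_simps power_add[symmetric] power_divide)
  also have "ln \<dots> = ln (t ^ j / M j) + ln ((t * tail n / n) ^ (n - j))"
    using pos by (intro ln_mult_pos) simp_all
  also have "\<dots> = ln_ratio t j + real (n - j) * ln (t * tail n / n)"
    using pos t by (simp add: ln_realpow ln_power_div_M)
  finally show ?thesis using ln_ratio_add_le_kappa[OF t j] by simp
qed

lemma omegaM_L_le_kappa: "0 < t \<Longrightarrow> omegaM L t \<le> kappa (omegaM M) t"
  using ln_power_div_L_le_kappa by (intro omegaM_le) auto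

lemma ln_power_div_L_le_omegaM_L: "0 < t \<Longrightarrow> ln (t ^ n / L n) \<le> omegaM L t"
  using le_omegaM[of t L "kappa (omegaM M) t" n] ln_power_div_L_le_kappa by simp

lemma power_mult_exp_le_L: "0 \<le> t \<Longrightarrow> t ^ n * exp (- omegaM L t) \<le> L n"
proof (cases "t = 0")
  case True
  then show ?thesis using L_seq_pos[of n] by (cases n) (auto simp: omegaM_def)
next
  case False
  assume "0 \<le> t"
  with False have t: "0 < t" by simp
  have "0 < t ^ n / L n" using t L_seq_pos[of n] by simp
  then have "t ^ n / L n \<le> exp (omegaM L t)"
    using ln_power_div_L_le_omegaM_L[OF t, of n] by (metis exp_le_cancel_iff exp_ln)
  then show ?thesis using L_seq_pos[of n] by (simp add: divide_le_eq exp_minus field_simps)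
qed

lemma power_mult_exp_le_lc_minorant:
  assumes "0 \<le> t" shows "t ^ n * exp (- omegaM L t) \<le> lc_minorant L n"
proof -
  have "bdd_above ((\<lambda>t. t ^ n * exp (- omegaM L t)) ` {0..})"
    using power_mult_exp_le_L by (intro bdd_aboveI2) auto
  then show ?thesis unfolding lc_minorant_def using assms by (simp, intro cSUP_upper) auto
qed

lemma lc_minorant_le_L: "lc_minorant L n \<le> L n"
  unfolding lc_minorant_def using power_mult_exp_le_L by (auto intro!: cSUP_least)

lemma lc_minorant_pos: "0 < lc_minorant L n"
proof -
  have "0 < (1::real) ^ n * exp (- omegaM L 1)" by simp
  then show ?thesis using power_mult_exp_le_lc_minorant[of 1 n] by linarith
qed

lemma lc_minorant_preceq_L: "seq_preceq (lc_minorant L) L"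
  by (rule seq_preceqI[where A = 1 and E = 1]) (use L_seq_pos lc_minorant_le_L in auto)

lemma omegaM_L_le_kappa_norm:
  assumes t: "1 \<le> t"
  shows "omegaM L t - kappa (omega_tilde M) 1 \<le> kappa_norm (omega_tilde M) t"
proof -
  have "omegaM L t \<le> kappa (omega_tilde M) t" if "0 < t" for t
    using omegaM_L_le_kappa[OF that] kappa_omegaM_le_kappa_omega_tilde[OF that] by linarith
  then show ?thesis using t by (cases "t = 1") (simp_all add: kappa_norm_def)
qed

lemma kappa_norm_le_kappa:
  "1 \<le> t \<Longrightarrow> kappa_norm (omega_tilde M) t \<le> kappa (omega_tilde M) t"
  using kappa_omega_tilde_nonneg[of 1] kappa_omega_tilde_nonneg[of t] by (simp add: kappa_norm_def)

lemma phi_star_term_le: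
  assumes y: "0 \<le> y"
  shows "real j * y - kappa_norm (omega_tilde M) (exp y)
           \<le> kappa (omega_tilde M) 1 + ln (lc_minorant L j)"
proof -
  have "j * y - kappa_norm (omega_tilde M) (exp y) \<le> j * y - omegaM L (exp y) + kappa (omega_tilde M) 1"
    using omegaM_L_le_kappa_norm[of "exp y"] y by simp
  also have "j * y - omegaM L (exp y) = ln (exp y ^ j * exp (- omegaM L (exp y)))"
    by (simp add: ln_mult_pos ln_realpow)
  also have "\<dots> \<le> ln (lc_minorant L j)"
    using power_mult_exp_le_lc_minorant[of "exp y" j] lc_minorant_pos[of j] by simp
  finally show ?thesis by simp
qed

lemma le_phi_star:
  "0 \<le> y \<Longrightarrow> real j * y - kappa_norm (omega_tilde M) (exp y)
    \<le> phi_star (kappa_norm (omega_tilde M)) (real j)"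
  unfolding phi_star_def using phi_star_term_le by (intro cSUP_upper bdd_aboveI2) auto

lemma K_seq_le_lc_minorant: "K_seq M j \<le> exp (kappa (omega_tilde M) 1) * lc_minorant L j"
proof -
  have "phi_star (kappa_norm (omega_tilde M)) (real j) \<le> kappa (omega_tilde M) 1 + ln (lc_minorant L j)"
    unfolding phi_star_def using phi_star_term_le by (auto intro!: cSUP_least)
  then have "K_seq M j \<le> exp (kappa (omega_tilde M) 1 + ln (lc_minorant L j))"
    unfolding K_seq_def by simp
  then show ?thesis using lc_minorant_pos[of j] by (simp add: exp_add)
qed

lemma power_mult_exp_le_K_seq:
  assumes s: "1 \<le> s" shows "s ^ k * exp (- kappa_norm (omega_tilde M) s) \<le> K_seq M k"
proof -
  have "real k * ln s - kappa_norm (omega_tilde M) s \<le> phi_star (kappa_norm (omega_tilde M)) (real k)"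
    using le_phi_star[of "ln s" k] s by simp
  then have "exp (real k * ln s - kappa_norm (omega_tilde M) s) \<le> K_seq M k"
    unfolding K_seq_def by simp
  then show ?thesis using s by (simp add: exp_diff exp_of_nat_mult exp_minus field_simps)
qed

lemma K_seq_ge_1: "1 \<le> K_seq M k"
  using power_mult_exp_le_K_seq[of 1 k] by (simp add: kappa_norm_def)

lemma K_seq_preceq_lc_minorant: "seq_preceq (K_seq M) (lc_minorant L)"
proof (rule seq_preceqI[where A = 1 and E = "exp (kappa (omega_tilde M) 1)"])
  show "1 \<le> exp (kappa (omega_tilde M) 1)" using kappa_omega_tilde_nonneg[of 1] by simp
qed (use lc_minorant_pos K_seq_le_lc_minorant in auto)

section \<open>The sequence S\<close>

lemma tau_eq: "tau M k = k / \<mu> k + tail k"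
  by (simp add: tau_def tail_def)

lemma tau_pos: "0 < tau M k"
  using tail_pos[of k] quot_pos[of k] by (simp add: tau_eq add_nonneg_pos)

lemma tau_div_antimono:
  assumes "1 \<le> i" "i \<le> j" shows "tau M j / j \<le> tau M i / i"
proof -
  have eq: "tau M k / k = 1 / \<mu> k + tail k / k" if "1 \<le> k" for k
    using that quot_pos[of k] by (simp add: tau_eq field_simps)
  have "1 / \<mu> j \<le> 1 / \<mu> i" using quot_mono[OF assms(2)] quot_pos[of i] by (simp add: frac_le)
  moreover have "tail j / j \<le> tail i / i"
    using tail_antimono[OF assms(2)] tail_pos[of i] assms by (simp add: frac_le)
  ultimately show ?thesis using eq assms by simp
qed

lemma sigma_pos: "0 < sigma M j"
  unfolding sigma_def using tau_pos[of 1] tau_pos[of j] by simp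

lemma sigma_mono:
  assumes "1 \<le> i" "i \<le> j" shows "sigma M i \<le> sigma M j"
proof -
  have eq: "sigma M k = tau M 1 / (tau M k / k)" if "1 \<le> k" for k
    using that by (simp add: sigma_def)
  have "0 < tau M i / i * (tau M j / j)" using tau_pos[of i] tau_pos[of j] assms by simp
  then show ?thesis
    unfolding eq[OF assms(1)] eq[OF order_trans[OF assms]]
    using tau_div_antimono[OF assms] tau_pos[of 1] by (intro divide_left_mono) auto
qed

definition sigma_factor :: real where "sigma_factor = max 1 (tau M 1)"

lemma sigma_factor_ge_1: "1 \<le> sigma_factor"
  by (simp add: sigma_factor_def)

lemma sigma_le: "sigma M j \<le> sigma_factor * \<mu> j"
proof (cases "j = 0")
  case False
  have "real j / \<mu> j \<le> tau M j" using tail_pos[of j] by (simp add: tau_eq)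
  then have "real j / tau M j \<le> \<mu> j" using tau_pos[of j] quot_pos[of j] by (simp add: field_simps)
  then have "sigma M j \<le> tau M 1 * \<mu> j"
    using False tau_pos[of 1] by (simp add: sigma_def mult_left_mono flip: times_divide_eq_right)
  also have "\<dots> \<le> sigma_factor * \<mu> j" using quot_pos[of j] by (simp add: sigma_factor_def)
  finally show ?thesis .
qed (simp add: sigma_def sigma_factor_def)

lemma S_seq_le:
  assumes "m \<le> k" shows "S_seq M k \<le> sigma_factor ^ (m + 1) * M m * sigma M k ^ (k - m)"
proof -
  have "S_seq M n \<le> sigma_factor ^ (m + 1) * M m * sigma M k ^ (n - m)" if "m \<le> n" "n \<le> k" for n
    using that
  proof (induction n rule: dec_induct)
    case base
    have "S_seq M m \<le> (\<Prod>j\<le>m. sigma_factor * \<mu> j)"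
      unfolding S_seq_def using sigma_pos sigma_le by (intro prod_mono) (simp add: less_imp_le)
    then show ?case by (simp add: prod.distrib M_eq_prod[of m])
  next
    case (step n)
    have "S_seq M (Suc n) = S_seq M n * sigma M (Suc n)" by (simp add: S_seq_def)
    also have "\<dots> \<le> (sigma_factor ^ (m + 1) * M m * sigma M k ^ (n - m)) * sigma M k"
      using step sigma_mono[of "Suc n" k] sigma_pos[of "Suc n"] sigma_pos[of k]
        sigma_factor_ge_1 M_pos[of m]
      by (intro mult_mono) (auto simp: S_seq_def prod_nonneg less_imp_le)
    also have "\<dots> = sigma_factor ^ (m + 1) * M m * sigma M k ^ (Suc n - m)"
      using step by (simp add: Suc_diff_le)
    finally show ?case .
  qed
  then show ?thesis using assms by simp
qed

lemma Gamma_less: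
  assumes "1 \<le> k" shows "\<Gamma> (k / tau M k) < k"
proof (rule ccontr)
  have "real k < \<mu> k * tau M k"
    using quot_pos[of k] tail_pos[of k] by (simp add: tau_eq distrib_left)
  then have "k / tau M k < \<mu> k" using tau_pos[of k] by (simp add: divide_less_eq mult.commute)
  moreover assume "\<not> \<Gamma> (k / tau M k) < k"
  then have "\<mu> k \<le> k / tau M k" using assms by (intro quot_le_of_le_Gamma) auto
  ultimately show False by simp
qed

lemma kappa_omegaM_le_at_tau:
  assumes k: "1 \<le> k" and t: "t = k / tau M k"
  shows "kappa (omegaM M) t \<le> ln (t ^ \<Gamma> t / M (\<Gamma> t)) + 3 * real k"
proof -
  define m where "m = \<Gamma> t"
  have t0: "0 < t" using k tau_pos[of k] by (simp add: t)
  have mk: "m < k" using Gamma_less[OF k] by (simp add: m_def t)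
  have "t < \<mu> (Suc m)" using less_quot_Suc_Gamma by (simp add: m_def)
  have "\<mu> (Suc m) * tail (Suc m) \<le> real k - real (Suc m) + \<mu> (Suc m) * tail k"
    using mk by (intro quot_mult_tail_le) simp
  then have "t / \<mu> (Suc m) * (\<mu> (Suc m) * tail (Suc m))
      \<le> t / \<mu> (Suc m) * (real k - real (Suc m) + \<mu> (Suc m) * tail k)"
    using t0 quot_pos[of "Suc m"] by (intro mult_left_mono) auto
  then have "t * tail (Suc m) \<le> t / \<mu> (Suc m) * (real k - real (Suc m)) + t * tail k"
    using quot_pos[of "Suc m"] by (simp add: field_simps)
  also have "t / \<mu> (Suc m) * (real k - real (Suc m)) \<le> real k - real (Suc m)"
    using \<open>t < \<mu> (Suc m)\<close> t0 quot_pos[of "Suc m"] mk by (intro mult_left_le_one_le) auto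
  also have "t * tail k \<le> k"
    using t0 tau_pos[of k] quot_pos[of k] by (simp add: t tau_eq field_simps)
  finally have "t * tail (Suc m) \<le> 2 * k" by simp
  then show ?thesis
    using kappa_omegaM_eq[OF t0] omegaM_eq[OF t0] ln_power_div_M[OF t0, of m] mk
    by (simp add: m_def)
qed

lemma S_seq_le_kappa:
  assumes k: "1 \<le> k"
  shows "\<exists>t>0. S_seq M k \<le> sigma_factor ^ (k + 1) * exp (3 * real k) * t ^ k * exp (- kappa (omegaM M) t)"
proof -
  define t where "t = k / tau M k"
  define m where "m = \<Gamma> t"
  have t0: "0 < t" using k tau_pos[of k] by (simp add: t_def)
  have mk: "m < k" using Gamma_less[OF k] by (simp add: m_def t_def)
  have D: "1 \<le> sigma_factor" "tau M 1 \<le> sigma_factor" by (auto simp: sigma_factor_def)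
  have "sigma M k = tau M 1 * t" using k by (simp add: sigma_def t_def)
  then have "S_seq M k \<le> sigma_factor ^ (m + 1) * M m * (tau M 1 * t) ^ (k - m)"
    using S_seq_le[of m k] mk by simp
  also have "\<dots> \<le> sigma_factor ^ (m + 1) * M m * (sigma_factor * t) ^ (k - m)"
    using D t0 tau_pos[of 1] M_pos[of m]
    by (intro mult_left_mono power_mono mult_right_mono) auto
  also have "\<dots> = sigma_factor ^ (k + 1) * t ^ k / (t ^ m / M m)"
    using mk t0 M_pos[of m] by (simp add: power_mult_distrib power_diff field_simps flip: power_add)
  also have "\<dots> = sigma_factor ^ (k + 1) * t ^ k * exp (- ln (t ^ m / M m))"
    using t0 M_pos[of m] by (simp add: exp_minus divide_inverse)
  also have "\<dots> \<le> sigma_factor ^ (k + 1) * t ^ k * exp (3 * real k + - kappa (omegaM M) t)"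
    using kappa_omegaM_le_at_tau[OF k t_def] t0 D by (intro mult_left_mono) (auto simp: m_def)
  also have "\<dots> = sigma_factor ^ (k + 1) * exp (3 * real k) * t ^ k * exp (- kappa (omegaM M) t)"
    by (simp only: exp_add ac_simps)
  finally show ?thesis using t0 by blast
qed

end

section \<open>Moderate growth\<close>

locale moderate_pair =
  A: nonquasianalytic_weight Ma + B: nonquasianalytic_weight Mb for Ma Mb +
  fixes C :: real
  assumes C_ge_1: "1 \<le> C"
    and moderate: "\<And>k. Ma (k + 2) \<le> C ^ (k + 2) * Mb k * Mb 2"
begin

lemma omegaM_le_shift:
  assumes u: "0 < u" shows "omegaM Mb u \<le> omegaM Ma (C * u) + ln (Mb 2) - 2 * ln u"
proof (rule omegaM_le[OF u])
  fix m
  have Cu: "0 < C * u" using C_ge_1 u by simp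
  have pos: "0 < u ^ m / Mb m" "0 < u ^ (m + 2) / (Mb m * Mb 2)"
    using u B.M_pos[of m] B.M_pos[of 2] by simp_all
  have "u ^ (m + 2) / (Mb m * Mb 2) = (C * u) ^ (m + 2) / (C ^ (m + 2) * Mb m * Mb 2)"
    using C_ge_1 by (simp add: power_mult_distrib)
  also have "\<dots> \<le> (C * u) ^ (m + 2) / Ma (m + 2)"
    using moderate[of m] A.M_pos[of "m + 2"] Cu by (intro divide_left_mono) auto
  finally have "ln (u ^ (m + 2) / (Mb m * Mb 2)) \<le> ln ((C * u) ^ (m + 2) / Ma (m + 2))"
    using pos by simp
  also have "\<dots> \<le> omegaM Ma (C * u)"
    using A.ln_ratio_le_omegaM[OF Cu, of "m + 2"] A.ln_power_div_M[OF Cu, of "m + 2"] by simp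
  finally have "ln (u ^ (m + 2) / (Mb m * Mb 2)) \<le> omegaM Ma (C * u)" .
  moreover have "ln (u ^ (m + 2) / (Mb m * Mb 2)) = ln (u ^ m / Mb m) + 2 * ln u - ln (Mb 2)"
    using u B.M_pos[of m] B.M_pos[of 2]
    by (simp add: ln_mult_pos ln_div ln_realpow power_add)
  ultimately show "ln (u ^ m * Mb 0 / Mb m) \<le> omegaM Ma (C * u) + ln (Mb 2) - 2 * ln u"
    by simp
qed

lemma omega_tilde_le_shift:
  assumes u: "0 < u" shows "omega_tilde Mb u \<le> omegaM Ma (C * u) + ln (2 * Mb 2)"
proof -
  have "omegaM Mb u + 2 * max 0 (ln u) \<le> omegaM Ma (C * u) + ln (Mb 2)"
  proof (cases "u \<le> 1")
    case True
    then show ?thesis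
      using B.omegaM_eq_0 A.omegaM_nonneg[of "C * u"] B.M_ge_1[of 2] u by simp
  next
    case False
    then show ?thesis using omegaM_le_shift[OF u] by simp
  qed
  then show ?thesis
    using ln_one_plus_square_le[OF u] B.M_pos[of 2] by (simp add: omega_tilde_def ln_mult_pos)
qed

lemma kappa_omega_tilde_le_shift:
  assumes s: "0 < s"
  shows "kappa (omega_tilde Mb) s \<le> kappa (omegaM Ma) (C * s) + ln (2 * Mb 2)"
proof -
  have Cs: "0 < C * s" using C_ge_1 s by simp
  have "((\<lambda>r. omegaM Ma (C * s * r) / r\<^sup>2 + ln (2 * Mb 2) * (1 / r\<^sup>2)) has_integral
          (kappa (omegaM Ma) (C * s) + ln (2 * Mb 2) * 1)) {1..}"
    using has_integral_inverse_power_to_inf[of 2 1]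
    by (intro has_integral_add has_integral_mult_right)
       (auto simp: A.kappa_omegaM_eq[OF Cs] A.has_integral_omegaM_over_square[OF Cs])
  moreover have "omega_tilde Mb (s * r) / r\<^sup>2 \<le> omegaM Ma (C * s * r) / r\<^sup>2 + ln (2 * Mb 2) * (1 / r\<^sup>2)"
    if "r \<in> {1..}" for r
    using omega_tilde_le_shift[of "s * r"] s that
    by (simp add: add_divide_distrib[symmetric] divide_right_mono mult.assoc)
  ultimately show ?thesis
    unfolding kappa_def
    by (intro has_integral_le[OF integrable_integral[OF B.integrable_omega_tilde_over_square[OF s]]])
       auto
qed

lemma power_mult_exp_le_K_seq:
  assumes t: "0 < t"
  shows "t ^ k * exp (- kappa (omegaM Ma) t) \<le> C ^ k * (2 * Mb 2) * K_seq Mb k"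
proof (cases "C \<le> t")
  case True
  define s where "s = t / C"
  have s: "1 \<le> s" "t = C * s" using True C_ge_1 by (simp_all add: s_def)
  have "kappa_norm (omega_tilde Mb) s \<le> kappa (omegaM Ma) t + ln (2 * Mb 2)"
    using B.kappa_norm_le_kappa[OF s(1)] kappa_omega_tilde_le_shift[of s] s by simp
  then have "exp (- kappa (omegaM Ma) t) \<le> exp (ln (2 * Mb 2) + - kappa_norm (omega_tilde Mb) s)"
    by simp
  also have "\<dots> = (2 * Mb 2) * exp (- kappa_norm (omega_tilde Mb) s)"
    using B.M_pos[of 2] by (simp only: exp_add) simp
  finally have "exp (- kappa (omegaM Ma) t) \<le> (2 * Mb 2) * exp (- kappa_norm (omega_tilde Mb) s)" .
  then have "t ^ k * exp (- kappa (omegaM Ma) t)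
      \<le> C ^ k * (2 * Mb 2) * (s ^ k * exp (- kappa_norm (omega_tilde Mb) s))"
    using s C_ge_1 by (simp add: power_mult_distrib mult_left_mono mult_ac)
  also have "\<dots> \<le> C ^ k * (2 * Mb 2) * K_seq Mb k"
    using B.power_mult_exp_le_K_seq[OF s(1)] C_ge_1 B.M_pos[of 2] by (intro mult_left_mono) auto
  finally show ?thesis .
next
  case False
  have "t ^ k * exp (- kappa (omegaM Ma) t) \<le> C ^ k * 1"
    using False t A.kappa_omegaM_nonneg[OF t] by (intro mult_mono power_mono) auto
  also have "\<dots> \<le> C ^ k * (2 * Mb 2 * K_seq Mb k)"
  proof -
    have "1 * 1 \<le> 2 * Mb 2 * K_seq Mb k"
      using B.M_ge_1[of 2] B.K_seq_ge_1[of k] by (intro mult_mono) auto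
    then show ?thesis using C_ge_1 by (intro mult_left_mono) auto
  qed
  finally show ?thesis by (simp add: mult.assoc)
qed

lemma S_seq_preceq_K_seq: "seq_preceq (S_seq Ma) (K_seq Mb)"
proof (rule seq_preceqI)
  let ?D = "A.sigma_factor"
  fix k :: nat assume k: "1 \<le> k"
  obtain t where t: "0 < t"
    and S: "S_seq Ma k \<le> ?D ^ (k + 1) * exp (3 * real k) * t ^ k * exp (- kappa (omegaM Ma) t)"
    using A.S_seq_le_kappa[OF k] by blast
  have "S_seq Ma k \<le> ?D ^ (k + 1) * exp (3 * real k) * (C ^ k * (2 * Mb 2) * K_seq Mb k)"
    using S power_mult_exp_le_K_seq[OF t, of k] A.sigma_factor_ge_1
    by (simp add: mult.assoc) (intro mult_left_mono order_trans[OF S]; simp)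
  also have "\<dots> = (?D * exp 3 * C) ^ k * (?D * (2 * Mb 2)) * K_seq Mb k"
    by (simp add: power_mult_distrib exp_of_nat_mult[symmetric] mult_ac)
  finally show "0 < K_seq Mb k \<and> S_seq Ma k \<le> (?D * exp 3 * C) ^ k * (?D * (2 * Mb 2)) * K_seq Mb k"
    using B.K_seq_ge_1[of k] by simp
next
  show "0 \<le> A.sigma_factor * exp 3 * C" using A.sigma_factor_ge_1 C_ge_1 by simp
next
  show "1 \<le> A.sigma_factor * (2 * Mb 2)"
    using mult_mono[of 1 A.sigma_factor 1 "2 * Mb 2"] A.sigma_factor_ge_1 B.M_ge_1[of 2] by simp
qed

end

theorem theorem4p5:
  fixes Mf :: "real \<Rightarrow> nat \<Rightarrow> real"
  assumes "weight_matrix Mf" and "nq_matrix Mf" and "R_moderate Mf"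
  shows "fam_preceq (\<lambda>\<alpha>. S_seq (Mf \<alpha>)) (\<lambda>\<alpha>. K_seq (Mf \<alpha>))
       \<and> fam_preceq (\<lambda>\<alpha>. K_seq (Mf \<alpha>)) (\<lambda>\<alpha>. lc_minorant (L_seq (Mf \<alpha>)))
       \<and> fam_preceq (\<lambda>\<alpha>. lc_minorant (L_seq (Mf \<alpha>))) (\<lambda>\<alpha>. L_seq (Mf \<alpha>))"
proof -
  have nq: "nonquasianalytic_weight (Mf \<alpha>)" if "0 < \<alpha>" for \<alpha>
    using assms(2) that by (simp add: nq_matrix_def nonquasianalytic_weight_def)
  have "\<exists>\<beta>>0. seq_preceq (S_seq (Mf \<alpha>)) (K_seq (Mf \<beta>))" if \<alpha>: "0 < \<alpha>" for \<alpha>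
  proof -
    obtain \<beta> C where \<beta>: "0 < \<beta>" and C: "1 \<le> C"
      and growth: "\<And>j k. Mf \<alpha> (j + k) \<le> C ^ (j + k) * Mf \<beta> j * Mf \<beta> k"
      using assms(3) \<alpha> unfolding R_moderate_def by blast
    have "moderate_pair (Mf \<alpha>) (Mf \<beta>) C"
      by (rule moderate_pair.intro[OF nq[OF \<alpha>] nq[OF \<beta>] moderate_pair_axioms.intro[OF C growth]])
    then show ?thesis using \<beta> moderate_pair.S_seq_preceq_K_seq by blast
  qed
  then show ?thesis
    using nq nonquasianalytic_weight.K_seq_preceq_lc_minorant
      nonquasianalytic_weight.lc_minorant_preceq_L
    unfolding fam_preceq_def by blast
qed

end
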